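(* Let $M$ be a complete $\mathrm{CAT}(0)$ space, $\mathcal{C}$ a collection of closed convex subspaces such that $(M,\mathcal{C})$ is a $(\nu,\phi)$--relatively hyperbolic pair. Put $\nu'=4\nu+2\phi(\nu)$, $\nu''=4\nu+2\phi(\nu')$, $\Delta(\nu,\phi)=\nu'+\nu''$. Let $Z\in\mathcal{C}$, $\pi_Z\colon M\to Z$ the closest point projection, $a,b\in M$, and $Q$ the geodesic quadrilateral with vertices $\pi_Z(a),a,b,\pi_Z(b)$. Then either $d(\pi_Z(a),\pi_Z(b))\le\phi(\nu')+2\nu+3\nu'$ or $Q$ is $\Delta(\nu,\phi)$--slim.
   Context: For a geodesic triangle with comparison-tripod map $\pi$: it is $\nu$--thin if all fibers of $\pi$ have diameter $\le\nu$; it is $\nu$--thin relative to $U$ if it is not $\nu$--thin and every fiber either has diameter $\le\nu$ or lies in $N_\nu(U)$. $(M,\mathcal{U})$ has $\nu$--relatively thin triangles if every geodesic triangle is $\nu$--thin or $\nu$--thin relative to some $U\in\mathcal{U}$. $(M,\mathcal{U})$ is a $(\nu,\phi)$--relatively hyperbolic pair ($\phi\colon\mathbb{R}_{\ge0}\to\mathbb{R}_{\ge0}$) if it has $\nu$--relatively thin triangles and $\operatorname{diam}(N_r(F_1)\cap N_r(F_2))\le\phi(r)$ for all $r\ge0$ and distinct $F_1,F_2\in\mathcal{U}$. A polygon is $\mu$--slim if each side lies in the $\mu$--neighborhood of the union of the other sides. *)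

theory Defs
  imports "HOL-Analysis.Analysis"
begin

definition geodesic_path :: "(real \<Rightarrow> 'a::metric_space) \<Rightarrow> 'a \<Rightarrow> 'a \<Rightarrow> bool" where
  "geodesic_path g x y \<longleftrightarrow> g 0 = x \<and> g (dist x y) = y \<and>
     (\<forall>s\<in>{0..dist x y}. \<forall>t\<in>{0..dist x y}. dist (g s) (g t) = \<bar>s - t\<bar>)"

definition geodesic_segment :: "(real \<Rightarrow> 'a::metric_space) \<Rightarrow> 'a \<Rightarrow> 'a \<Rightarrow> 'a set" where
  "geodesic_segment g x y = g ` {0..dist x y}"

definition geodesic_space :: "'a::metric_space itself \<Rightarrow> bool" where
  "geodesic_space _ \<longleftrightarrow> (\<forall>x y::'a. \<exists>g. geodesic_path g x y)"

definition geod_triangle :: "'a::metric_space \<Rightarrow> 'a \<Rightarrow> 'a \<Rightarrow>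
    (real \<Rightarrow> 'a) \<Rightarrow> (real \<Rightarrow> 'a) \<Rightarrow> (real \<Rightarrow> 'a) \<Rightarrow> bool" where
  "geod_triangle x y z p1 p2 p3 \<longleftrightarrow>
     geodesic_path p1 x y \<and> geodesic_path p2 y z \<and> geodesic_path p3 z x"

(* pairs (point on a side, its comparison point in the Euclidean plane = complex numbers),
   for the comparison triangle xb yb zb *)
definition comparison_pairs :: "'a::metric_space \<Rightarrow> 'a \<Rightarrow> 'a \<Rightarrow>
    (real \<Rightarrow> 'a) \<Rightarrow> (real \<Rightarrow> 'a) \<Rightarrow> (real \<Rightarrow> 'a) \<Rightarrow> complex \<Rightarrow> complex \<Rightarrow> complex
    \<Rightarrow> ('a \<times> complex) set" where
  "comparison_pairs x y z p1 p2 p3 xb yb zb =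
     (\<lambda>s. (p1 s, xb + complex_of_real (s / dist x y) * (yb - xb))) ` {0..dist x y} \<union>
     (\<lambda>s. (p2 s, yb + complex_of_real (s / dist y z) * (zb - yb))) ` {0..dist y z} \<union>
     (\<lambda>s. (p3 s, zb + complex_of_real (s / dist z x) * (xb - zb))) ` {0..dist z x}"

definition CAT0 :: "'a::metric_space itself \<Rightarrow> bool" where
  "CAT0 T \<longleftrightarrow> geodesic_space T \<and>
     (\<forall>(x::'a) y z p1 p2 p3. geod_triangle x y z p1 p2 p3 \<longrightarrow>
        (\<forall>xb yb zb. dist xb yb = dist x y \<and> dist yb zb = dist y z \<and> dist zb xb = dist z x \<longrightarrow>
           (\<forall>(a, ab)\<in>comparison_pairs x y z p1 p2 p3 xb yb zb.
              \<forall>(b, bb)\<in>comparison_pairs x y z p1 p2 p3 xb yb zb. dist a b \<le> dist ab bb)))"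

definition geod_convex :: "'a::metric_space set \<Rightarrow> bool" where
  "geod_convex Z \<longleftrightarrow> (\<forall>x\<in>Z. \<forall>y\<in>Z. \<forall>g. geodesic_path g x y \<longrightarrow> geodesic_segment g x y \<subseteq> Z)"

definition closest_proj :: "'a::metric_space set \<Rightarrow> 'a \<Rightarrow> 'a" where
  "closest_proj Z a = (THE p. p \<in> Z \<and> (\<forall>q\<in>Z. dist a p \<le> dist a q))"

definition nbhd :: "real \<Rightarrow> 'a::metric_space set \<Rightarrow> 'a set" where
  "nbhd r U = {p. infdist p U \<le> r}"

definition gprod :: "'a::metric_space \<Rightarrow> 'a \<Rightarrow> 'a \<Rightarrow> real" where
  "gprod w u v = (dist w u + dist w v - dist u v) / 2"

(* the fibers of the comparison-tripod map of the triangle (x,y,z; p1,p2,p3):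
   one fiber for each non-central tripod point (distance s from a vertex, s < leg length),
   plus the central fiber consisting of the three internal points *)
definition tri_fibers :: "'a::metric_space \<Rightarrow> 'a \<Rightarrow> 'a \<Rightarrow>
    (real \<Rightarrow> 'a) \<Rightarrow> (real \<Rightarrow> 'a) \<Rightarrow> (real \<Rightarrow> 'a) \<Rightarrow> 'a set set" where
  "tri_fibers x y z p1 p2 p3 =
     (\<lambda>s. {p1 s, p3 (dist z x - s)}) ` {0..<gprod x y z} \<union>
     (\<lambda>s. {p1 (dist x y - s), p2 s}) ` {0..<gprod y x z} \<union>
     (\<lambda>s. {p2 (dist y z - s), p3 s}) ` {0..<gprod z x y} \<union>
     {{p1 (gprod x y z), p2 (gprod y x z), p3 (gprod z x y)}}"

definition tri_thin :: "real \<Rightarrow> 'a::metric_space \<Rightarrow> 'a \<Rightarrow> 'a \<Rightarrow>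
    (real \<Rightarrow> 'a) \<Rightarrow> (real \<Rightarrow> 'a) \<Rightarrow> (real \<Rightarrow> 'a) \<Rightarrow> bool" where
  "tri_thin \<nu> x y z p1 p2 p3 \<longleftrightarrow> (\<forall>F\<in>tri_fibers x y z p1 p2 p3. diameter F \<le> \<nu>)"

definition tri_thin_rel :: "real \<Rightarrow> 'a::metric_space set \<Rightarrow> 'a \<Rightarrow> 'a \<Rightarrow> 'a \<Rightarrow>
    (real \<Rightarrow> 'a) \<Rightarrow> (real \<Rightarrow> 'a) \<Rightarrow> (real \<Rightarrow> 'a) \<Rightarrow> bool" where
  "tri_thin_rel \<nu> U x y z p1 p2 p3 \<longleftrightarrow> \<not> tri_thin \<nu> x y z p1 p2 p3 \<and>
     (\<forall>F\<in>tri_fibers x y z p1 p2 p3. diameter F \<le> \<nu> \<or> F \<subseteq> nbhd \<nu> U)"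

definition rel_thin_triangles :: "real \<Rightarrow> 'a::metric_space set set \<Rightarrow> bool" where
  "rel_thin_triangles \<nu> \<U> \<longleftrightarrow>
     (\<forall>x y z p1 p2 p3. geod_triangle x y z p1 p2 p3 \<longrightarrow>
        tri_thin \<nu> x y z p1 p2 p3 \<or> (\<exists>U\<in>\<U>. tri_thin_rel \<nu> U x y z p1 p2 p3))"

definition rel_hyp_pair :: "real \<Rightarrow> (real \<Rightarrow> real) \<Rightarrow> 'a::metric_space set set \<Rightarrow> bool" where
  "rel_hyp_pair \<nu> \<phi> \<U> \<longleftrightarrow> rel_thin_triangles \<nu> \<U> \<and>
     (\<forall>r\<ge>0. \<forall>F1\<in>\<U>. \<forall>F2\<in>\<U>. F1 \<noteq> F2 \<longrightarrow>
        bounded (nbhd r F1 \<inter> nbhd r F2) \<and> diameter (nbhd r F1 \<inter> nbhd r F2) \<le> \<phi> r)"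

definition geod_quad :: "'a::metric_space \<Rightarrow> 'a \<Rightarrow> 'a \<Rightarrow> 'a \<Rightarrow>
    (real \<Rightarrow> 'a) \<Rightarrow> (real \<Rightarrow> 'a) \<Rightarrow> (real \<Rightarrow> 'a) \<Rightarrow> (real \<Rightarrow> 'a) \<Rightarrow> bool" where
  "geod_quad v1 v2 v3 v4 q1 q2 q3 q4 \<longleftrightarrow> geodesic_path q1 v1 v2 \<and> geodesic_path q2 v2 v3 \<and>
     geodesic_path q3 v3 v4 \<and> geodesic_path q4 v4 v1"

definition quad_slim :: "real \<Rightarrow> 'a::metric_space \<Rightarrow> 'a \<Rightarrow> 'a \<Rightarrow> 'a \<Rightarrow>
    (real \<Rightarrow> 'a) \<Rightarrow> (real \<Rightarrow> 'a) \<Rightarrow> (real \<Rightarrow> 'a) \<Rightarrow> (real \<Rightarrow> 'a) \<Rightarrow> bool" where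
  "quad_slim \<mu> v1 v2 v3 v4 q1 q2 q3 q4 \<longleftrightarrow>
     (let S1 = geodesic_segment q1 v1 v2; S2 = geodesic_segment q2 v2 v3;
          S3 = geodesic_segment q3 v3 v4; S4 = geodesic_segment q4 v4 v1 in
      S1 \<subseteq> nbhd \<mu> (S2 \<union> S3 \<union> S4) \<and> S2 \<subseteq> nbhd \<mu> (S1 \<union> S3 \<union> S4) \<and>
      S3 \<subseteq> nbhd \<mu> (S1 \<union> S2 \<union> S4) \<and> S4 \<subseteq> nbhd \<mu> (S1 \<union> S2 \<union> S3))"

end

theory Submission
  imports Defs
begin

(* Let p, q be the closest points of Z to a, b.  The geodesics [p, a] and [q, b] leave Z at unit
   speed while [p, q] stays in Z.  Relative thinness of the triangles (p, q, b) and (p, a, b), together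
   with the bound \<phi> r on the diameter of N_r(Z) \<inter> N_r(U) for U \<noteq> Z, shows that whenever p and q
   are far apart the side [a, b] passes within 3\<nu> + \<phi> \<nu> + \<phi> \<nu>' of p, and symmetrically of q.
   Convexity of the CAT(0) metric then makes [p, a], [p, q] and [q, b] fellow-travel the corresponding
   pieces of [a, b].  Completeness and convexity of Z only serve to make the projection well defined. *)

lemma geodesic_path_start: "geodesic_path g x y \<Longrightarrow> g 0 = x"
  by (simp add: geodesic_path_def)

lemma geodesic_path_end: "geodesic_path g x y \<Longrightarrow> g (dist x y) = y"
  by (simp add: geodesic_path_def)

lemma geodesic_path_dist:
  "geodesic_path g x y \<Longrightarrow> s \<in> {0..dist x y} \<Longrightarrow> t \<in> {0..dist x y} \<Longrightarrow> dist (g s) (g t) = \<bar>s - t\<bar>"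
  by (simp add: geodesic_path_def)

lemma geodesic_path_dist_start: "geodesic_path g x y \<Longrightarrow> s \<in> {0..dist x y} \<Longrightarrow> dist x (g s) = s"
  using geodesic_path_dist[of g x y 0 s] geodesic_path_start[of g x y] by auto

lemma geodesic_path_dist_end:
  "geodesic_path g x y \<Longrightarrow> s \<in> {0..dist x y} \<Longrightarrow> dist (g s) y = dist x y - s"
  using geodesic_path_dist[of g x y s "dist x y"] geodesic_path_end[of g x y] by auto

lemma geodesic_path_reverse: "geodesic_path g x y \<Longrightarrow> geodesic_path (\<lambda>t. g (dist x y - t)) y x"
  unfolding geodesic_path_def by (auto simp: dist_commute)

lemma geodesic_segment_reverse:
  "geodesic_segment (\<lambda>t. g (dist x y - t)) y x = geodesic_segment g x y"
proof -
  have "(\<lambda>t. dist x y - t) ` {0..dist x y} = {0..dist x y}"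
    by (auto simp: image_iff intro: bexI[where x = "dist x y - _"])
  then have "g ` (\<lambda>t. dist x y - t) ` {0..dist x y} = g ` {0..dist x y}" by simp
  then show ?thesis unfolding geodesic_segment_def image_image by (simp add: dist_commute)
qed

lemma geodesic_subpath:
  assumes g: "geodesic_path g x y" and "0 \<le> u" "u \<le> v" "v \<le> dist x y"
  shows "geodesic_path (\<lambda>t. g (u + t)) (g u) (g v)"
    and "geodesic_segment (\<lambda>t. g (u + t)) (g u) (g v) = g ` {u..v}"
proof -
  have d: "dist (g u) (g v) = v - u" using geodesic_path_dist[OF g, of u v] assms by auto
  show "geodesic_path (\<lambda>t. g (u + t)) (g u) (g v)"
    unfolding geodesic_path_def d using assms geodesic_path_dist[OF g] by auto
  have "(\<lambda>t. u + t) ` {0..v - u} = {u..v}"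
    by (auto simp: image_iff intro: bexI[where x = "_ - u"])
  then have "g ` (\<lambda>t. u + t) ` {0..v - u} = g ` {u..v}" by simp
  then show "geodesic_segment (\<lambda>t. g (u + t)) (g u) (g v) = g ` {u..v}"
    unfolding geodesic_segment_def d image_image .
qed

lemma geodesic_path_attains_near:
  assumes c: "geodesic_path c x y"
    and near: "\<And>\<epsilon>. 0 < \<epsilon> \<Longrightarrow> \<exists>s\<in>{0..dist x y}. dist (c s) z \<le> r + \<epsilon>"
  shows "\<exists>s\<in>{0..dist x y}. dist (c s) z \<le> r"
proof -
  have "1-lipschitz_on {0..dist x y} c"
    using geodesic_path_dist[OF c] by (auto simp: lipschitz_on_def dist_real_def)
  then have "continuous_on {0..dist x y} (\<lambda>s. dist (c s) z)"
    by (intro continuous_on_dist continuous_on_const lipschitz_on_continuous_on)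
  moreover have "{0..dist x y} \<noteq> {}" by simp
  ultimately obtain s where s: "s \<in> {0..dist x y}" "\<forall>t\<in>{0..dist x y}. dist (c s) z \<le> dist (c t) z"
    using continuous_attains_inf[OF compact_Icc] by blast
  have "dist (c s) z \<le> r"
  proof (rule field_le_epsilon)
    fix \<epsilon> :: real assume "0 < \<epsilon>"
    then obtain t where t: "t \<in> {0..dist x y}" "dist (c t) z \<le> r + \<epsilon>" using near by blast
    then have "dist (c s) z \<le> dist (c t) z" using s(2) by blast
    then show "dist (c s) z \<le> r + \<epsilon>" using t(2) by linarith
  qed
  then show ?thesis using s(1) by blast
qed

section \<open>CAT(0) comparison\<close>

lemma euclidean_triangle_exists:
  fixes A B C :: real
  assumes "0 \<le> A" "0 \<le> B" "0 \<le> C" "A \<le> B + C" "B \<le> A + C" "C \<le> A + B"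
  shows "\<exists>xb yb zb :: complex. dist xb yb = A \<and> dist yb zb = B \<and> dist zb xb = C"
proof (cases "A = 0")
  case True
  then have "B = C" using assms by auto
  then show ?thesis using True assms
    by (intro exI[of _ 0] exI[of _ 0] exI[of _ "complex_of_real C"]) (auto simp: dist_norm)
next
  case False
  then have A: "A > 0" using assms by auto
  \<comment> \<open>the third vertex is \<open>Complex u v\<close>, with \<open>u\<close> from the law of cosines\<close>
  define u where "u = (A\<^sup>2 + C\<^sup>2 - B\<^sup>2) / (2 * A)"
  have "(A - C)\<^sup>2 \<le> B\<^sup>2" using abs_le_square_iff[of "A - C" B] assms by auto
  moreover have "B\<^sup>2 \<le> (A + C)\<^sup>2" using assms by (intro power_mono) auto
  ultimately have "\<bar>u\<bar> \<le> C" using A unfolding u_def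
    by (auto simp: abs_le_iff divide_le_eq le_divide_eq power2_eq_square algebra_simps)
  then have "u\<^sup>2 \<le> C\<^sup>2" using abs_le_square_iff[of u C] assms by auto
  define v where "v = sqrt (C\<^sup>2 - u\<^sup>2)"
  have v: "v\<^sup>2 = C\<^sup>2 - u\<^sup>2" unfolding v_def using \<open>u\<^sup>2 \<le> C\<^sup>2\<close> by simp
  have "(A - u)\<^sup>2 + v\<^sup>2 = B\<^sup>2"
    using v A unfolding u_def by (simp add: power2_eq_square field_simps)
  then have "dist (complex_of_real A) (Complex u v) = B"
    using assms by (simp add: dist_norm cmod_def)
  moreover have "dist (Complex u v) 0 = C"
    using v assms by (simp add: dist_norm cmod_def)
  moreover have "dist 0 (complex_of_real A) = A" using A by (simp add: dist_norm)
  ultimately show ?thesis by blast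
qed

lemma comparison_triangle_exists:
  fixes x y z :: "'a::metric_space"
  shows "\<exists>xb yb zb :: complex. dist xb yb = dist x y \<and> dist yb zb = dist y z \<and> dist zb xb = dist z x"
  by (metis euclidean_triangle_exists dist_commute dist_triangle dist_triangle2 zero_le_dist)

lemma comparison_point_rescale:
  fixes xb yb :: complex
  assumes "dist xb yb = d"
  shows "complex_of_real (l * d / d) * (yb - xb) = complex_of_real l * (yb - xb)"
  using assms by (cases "d = 0") auto

lemma CAT0_geodesic_exists: "CAT0 TYPE('a::metric_space) \<Longrightarrow> \<exists>g. geodesic_path g (x::'a) y"
  unfolding CAT0_def geodesic_space_def by blast

lemma CAT0_comparison:
  fixes x y z :: "'a::metric_space"
  assumes "CAT0 TYPE('a)" "geod_triangle x y z p1 p2 p3"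
    "dist xb yb = dist x y" "dist yb zb = dist y z" "dist zb xb = dist z x"
    "(u, ub) \<in> comparison_pairs x y z p1 p2 p3 xb yb zb"
    "(w, wb) \<in> comparison_pairs x y z p1 p2 p3 xb yb zb"
  shows "dist u w \<le> dist ub wb"
  using assms unfolding CAT0_def by fastforce

lemma CAT0_vertex_comparison:
  fixes x y1 y2 :: "'a::metric_space"
  assumes cat: "CAT0 TYPE('a)" and c1: "geodesic_path c1 x y1" and c2: "geodesic_path c2 x y2"
    and l: "0 \<le> l" "l \<le> 1"
  shows "dist (c1 (l * dist x y1)) (c2 (l * dist x y2)) \<le> l * dist y1 y2"
proof -
  obtain m where m: "geodesic_path m y1 y2" using CAT0_geodesic_exists[OF cat] by blast
  define c3 where "c3 = (\<lambda>t. c2 (dist x y2 - t))"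
  have tri: "geod_triangle x y1 y2 c1 m c3"
    unfolding geod_triangle_def c3_def using c1 m geodesic_path_reverse[OF c2] by auto
  obtain xb yb zb :: complex where cmp: "dist xb yb = dist x y1" "dist yb zb = dist y1 y2"
      "dist zb xb = dist y2 x"
    using comparison_triangle_exists by blast
  have "(c1 (l * dist x y1), xb + complex_of_real (l * dist x y1 / dist x y1) * (yb - xb))
      \<in> comparison_pairs x y1 y2 c1 m c3 xb yb zb"
    unfolding comparison_pairs_def using l
    by (intro UnI1) (auto intro!: image_eqI[where x = "l * dist x y1"] mult_left_le_one_le)
  moreover have "(c3 ((1 - l) * dist y2 x),
        zb + complex_of_real ((1 - l) * dist y2 x / dist y2 x) * (xb - zb))
      \<in> comparison_pairs x y1 y2 c1 m c3 xb yb zb"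
    unfolding comparison_pairs_def using l
    by (intro UnI2) (auto intro!: image_eqI[where x = "(1 - l) * dist y2 x"] mult_left_le_one_le)
  moreover have "c3 ((1 - l) * dist y2 x) = c2 (l * dist x y2)"
    unfolding c3_def by (simp add: dist_commute algebra_simps)
  ultimately have "dist (c1 (l * dist x y1)) (c2 (l * dist x y2)) \<le>
      dist (xb + complex_of_real l * (yb - xb)) (zb + complex_of_real (1 - l) * (xb - zb))"
    using CAT0_comparison[OF cat tri cmp]
    unfolding comparison_point_rescale[OF cmp(1)] comparison_point_rescale[OF cmp(3)] by simp
  also have "\<dots> = cmod (complex_of_real l * (yb - zb))"
    by (simp add: dist_norm algebra_simps)
  also have "\<dots> = l * dist y1 y2" using cmp l by (simp add: norm_mult dist_norm)
  finally show ?thesis .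
qed

lemma CAT0_dist_convex:
  fixes x1 y1 x2 y2 :: "'a::metric_space"
  assumes cat: "CAT0 TYPE('a)" and c1: "geodesic_path c1 x1 y1" and c2: "geodesic_path c2 x2 y2"
    and l: "0 \<le> l" "l \<le> 1"
  shows "dist (c1 (l * dist x1 y1)) (c2 (l * dist x2 y2)) \<le> (1 - l) * dist x1 x2 + l * dist y1 y2"
proof -
  obtain c where c: "geodesic_path c x1 y2" using CAT0_geodesic_exists[OF cat] by blast
  have "dist (c1 (l * dist x1 y1)) (c (l * dist x1 y2)) \<le> l * dist y1 y2"
    using CAT0_vertex_comparison[OF cat c1 c l] .
  moreover have "dist (c (l * dist x1 y2)) (c2 (l * dist x2 y2)) \<le> (1 - l) * dist x1 x2"
    using CAT0_vertex_comparison[OF cat geodesic_path_reverse[OF c] geodesic_path_reverse[OF c2],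
        of "1 - l"] l
    by (simp add: dist_commute algebra_simps)
  ultimately show ?thesis
    using dist_triangle[of "c1 (l * dist x1 y1)" "c2 (l * dist x2 y2)" "c (l * dist x1 y2)"] by linarith
qed

text \<open>The CN inequality of Bruhat and Tits, read off from the median formula in a comparison triangle.\<close>

lemma CAT0_CN_inequality:
  fixes x y z :: "'a::metric_space"
  assumes cat: "CAT0 TYPE('a)" and g: "geodesic_path g x y"
  shows "(dist z (g (dist x y / 2)))\<^sup>2 \<le> (dist z x)\<^sup>2 / 2 + (dist z y)\<^sup>2 / 2 - (dist x y)\<^sup>2 / 4"
proof -
  obtain p2 where p2: "geodesic_path p2 y z" using CAT0_geodesic_exists[OF cat] by blast
  obtain p3 where p3: "geodesic_path p3 z x" using CAT0_geodesic_exists[OF cat] by blast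
  have tri: "geod_triangle x y z g p2 p3" unfolding geod_triangle_def using g p2 p3 by auto
  obtain xb yb zb :: complex where cmp: "dist xb yb = dist x y" "dist yb zb = dist y z"
      "dist zb xb = dist z x"
    using comparison_triangle_exists by blast
  define mb where "mb = xb + complex_of_real (1/2) * (yb - xb)"
  have "(g ((1/2) * dist x y), xb + complex_of_real ((1/2) * dist x y / dist x y) * (yb - xb))
      \<in> comparison_pairs x y z g p2 p3 xb yb zb"
    unfolding comparison_pairs_def by (intro UnI1) (auto intro!: image_eqI[where x = "(1/2) * dist x y"])
  moreover have "(p3 0, zb + complex_of_real (0 / dist z x) * (xb - zb))
      \<in> comparison_pairs x y z g p2 p3 xb yb zb"
    unfolding comparison_pairs_def by (intro UnI2) (auto intro!: image_eqI[where x = 0])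
  ultimately have "dist (g ((1/2) * dist x y)) z \<le> dist mb zb"
    using CAT0_comparison[OF cat tri cmp] geodesic_path_start[OF p3]
    unfolding comparison_point_rescale[OF cmp(1)] mb_def by simp
  then have "(dist z (g (dist x y / 2)))\<^sup>2 \<le> (cmod (zb - mb))\<^sup>2"
    by (intro power_mono) (auto simp: dist_commute dist_norm norm_minus_commute)
  also have "\<dots> = (cmod (zb - xb))\<^sup>2 / 2 + (cmod (zb - yb))\<^sup>2 / 2 - (cmod (xb - yb))\<^sup>2 / 4"
    unfolding mb_def cmod_power2 by (simp add: power2_eq_square field_simps)
  also have "\<dots> = (dist z x)\<^sup>2 / 2 + (dist z y)\<^sup>2 / 2 - (dist x y)\<^sup>2 / 4"
    using cmp by (simp add: dist_norm norm_minus_commute dist_commute)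
  finally show ?thesis .
qed

lemma CAT0_geodesic_near:
  fixes x1 y1 x2 y2 :: "'a::metric_space"
  assumes cat: "CAT0 TYPE('a)" and c1: "geodesic_path c1 x1 y1" and c2: "geodesic_path c2 x2 y2"
    and r: "dist x1 x2 \<le> r" "dist y1 y2 \<le> r" and t: "t \<in> {0..dist x1 y1}"
  shows "infdist (c1 t) (geodesic_segment c2 x2 y2) \<le> r"
proof -
  define l where "l = (if dist x1 y1 = 0 then 0 else t / dist x1 y1)"
  have l: "0 \<le> l" "l \<le> 1" "l * dist x1 y1 = t" using t unfolding l_def by auto
  have "dist (c1 t) (c2 (l * dist x2 y2)) \<le> (1 - l) * dist x1 x2 + l * dist y1 y2"
    using CAT0_dist_convex[OF cat c1 c2 l(1,2)] l(3) by simp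
  also have "\<dots> \<le> (1 - l) * r + l * r" using l r by (intro add_mono mult_left_mono) auto
  finally have "dist (c1 t) (c2 (l * dist x2 y2)) \<le> r" by (simp add: algebra_simps)
  moreover have "c2 (l * dist x2 y2) \<in> geodesic_segment c2 x2 y2"
    unfolding geodesic_segment_def using l by (auto intro!: imageI mult_left_le_one_le)
  ultimately show ?thesis using infdist_le2 by blast
qed

lemma CAT0_segment_subset_nbhd:
  fixes x1 y1 x2 y2 :: "'a::metric_space"
  assumes "CAT0 TYPE('a)" "geodesic_path c1 x1 y1" "geodesic_path c2 x2 y2"
    and "dist x1 x2 \<le> r" "dist y1 y2 \<le> r"
  shows "geodesic_segment c1 x1 y1 \<subseteq> nbhd r (geodesic_segment c2 x2 y2)"
  using CAT0_geodesic_near[OF assms] unfolding geodesic_segment_def nbhd_def by auto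

section \<open>Closest point projections\<close>

lemma CAT0_convex_dist_sq_le:
  fixes a :: "'a::metric_space"
  assumes cat: "CAT0 TYPE('a)" and Z: "geod_convex Z" and xy: "x \<in> Z" "y \<in> Z"
  shows "(dist x y)\<^sup>2 \<le> 2 * (dist a x)\<^sup>2 + 2 * (dist a y)\<^sup>2 - 4 * (infdist a Z)\<^sup>2"
proof -
  obtain g where g: "geodesic_path g x y" using CAT0_geodesic_exists[OF cat] by blast
  have "g (dist x y / 2) \<in> Z"
    using Z xy g unfolding geod_convex_def geodesic_segment_def by fastforce
  then have "(infdist a Z)\<^sup>2 \<le> (dist a (g (dist x y / 2)))\<^sup>2"
    by (intro power_mono infdist_le infdist_nonneg)
  then show ?thesis using CAT0_CN_inequality[OF cat g, of a] by simp
qed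

lemma CAT0_minimizing_sequence_Cauchy:
  fixes a :: "'a::metric_space"
  assumes cat: "CAT0 TYPE('a)" and Z: "geod_convex Z" and zs: "\<And>n. zs n \<in> Z"
    and lim: "(\<lambda>n. dist a (zs n)) \<longlonglongrightarrow> infdist a Z"
  shows "Cauchy zs"
proof (rule metric_CauchyI)
  define D where "D = infdist a Z"
  have excess: "(\<lambda>n. (dist a (zs n))\<^sup>2 - D\<^sup>2) \<longlonglongrightarrow> 0"
    using tendsto_diff[OF tendsto_power[OF lim, of 2] tendsto_const[of "D\<^sup>2"]] unfolding D_def by simp
  fix e :: real assume "0 < e"
  then obtain N where N0: "\<forall>n\<ge>N. norm ((dist a (zs n))\<^sup>2 - D\<^sup>2 - 0) < e\<^sup>2 / 4"
    using LIMSEQ_D[OF excess, of "e\<^sup>2 / 4"] by auto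
  have N: "(dist a (zs n))\<^sup>2 - D\<^sup>2 < e\<^sup>2 / 4" if "n \<ge> N" for n
    using N0[rule_format, OF that] abs_ge_self[of "(dist a (zs n))\<^sup>2 - D\<^sup>2"] by simp
  have "dist (zs m) (zs n) < e" if "m \<ge> N" "n \<ge> N" for m n
  proof -
    have "(dist (zs m) (zs n))\<^sup>2 < e\<^sup>2"
      using CAT0_convex_dist_sq_le[OF cat Z zs[of m] zs[of n], of a] N[OF that(1)] N[OF that(2)]
      unfolding D_def by argo
    then show ?thesis using \<open>0 < e\<close> by (auto intro: power_less_imp_less_base)
  qed
  then show "\<exists>M. \<forall>m\<ge>M. \<forall>n\<ge>M. dist (zs m) (zs n) < e" by blast
qed

lemma CAT0_closest_point_unique:
  fixes a :: "'a::complete_space"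
  assumes cat: "CAT0 TYPE('a)" and Z: "Z \<noteq> {}" "closed Z" "geod_convex Z"
  shows "\<exists>!p. p \<in> Z \<and> (\<forall>q\<in>Z. dist a p \<le> dist a q)"
proof -
  define D where "D = infdist a Z"
  have D: "\<And>q. q \<in> Z \<Longrightarrow> D \<le> dist a q" unfolding D_def by (rule infdist_le)
  have "\<exists>z\<in>Z. dist a z < D + inverse (real (Suc n))" for n
    using cInf_lessD[of "dist a ` Z" "D + inverse (real (Suc n))"] Z(1)
    unfolding D_def infdist_notempty[OF Z(1)] by auto
  then obtain zs where zs: "\<And>n. zs n \<in> Z" "\<And>n. dist a (zs n) < D + inverse (real (Suc n))"
    by metis
  have lim: "(\<lambda>n. dist a (zs n)) \<longlonglongrightarrow> D"
  proof (rule real_tendsto_sandwich[of "\<lambda>_. D" _ _ "\<lambda>n. D + inverse (real (Suc n))"])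
    show "(\<lambda>n. D + inverse (real (Suc n))) \<longlonglongrightarrow> D"
      using tendsto_add[OF tendsto_const LIMSEQ_inverse_real_of_nat, of D] by simp
  qed (use D zs(1) less_imp_le[OF zs(2)] in auto)
  have "Cauchy zs" using CAT0_minimizing_sequence_Cauchy[OF cat Z(3) zs(1) lim[unfolded D_def]] .
  then obtain l where l: "zs \<longlonglongrightarrow> l" using Cauchy_convergent convergent_def by blast
  have "l \<in> Z" using closed_sequentially[OF Z(2) zs(1) l] .
  have "dist a l = D"
    using tendsto_unique[OF _ tendsto_dist[OF tendsto_const l] lim] by simp
  then have min: "\<forall>q\<in>Z. dist a l \<le> dist a q" using D by force
  show ?thesis
  proof (rule ex1I[of _ l])
    fix p assume p: "p \<in> Z \<and> (\<forall>q\<in>Z. dist a p \<le> dist a q)"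
    then have "dist a p = D" using min \<open>l \<in> Z\<close> D \<open>dist a l = D\<close> by force
    then have "(dist p l)\<^sup>2 \<le> 0"
      using CAT0_convex_dist_sq_le[OF cat Z(3), of p l a] p \<open>l \<in> Z\<close> \<open>dist a l = D\<close>
      unfolding D_def by simp
    then show "p = l" by simp
  qed (use \<open>l \<in> Z\<close> min in blast)
qed

lemma
  fixes a :: "'a::complete_space"
  assumes "CAT0 TYPE('a)" "Z \<noteq> {}" "closed Z" "geod_convex Z"
  shows closest_proj_mem: "closest_proj Z a \<in> Z"
    and closest_proj_le: "\<And>q. q \<in> Z \<Longrightarrow> dist a (closest_proj Z a) \<le> dist a q"
  using theI'[OF CAT0_closest_point_unique[OF assms, of a]] unfolding closest_proj_def by auto

lemma dist_proj_le_infdist: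
  assumes "p \<in> Z" "\<And>z. z \<in> Z \<Longrightarrow> dist a p \<le> dist a z" "dist a y + dist y p = dist a p"
  shows "dist y p \<le> infdist y Z"
proof -
  have "dist y p \<le> dist y z" if "z \<in> Z" for z
    using assms(2)[OF that] assms(3) dist_triangle[of a z y] by linarith
  moreover have "Z \<noteq> {}" using assms(1) by blast
  ultimately show ?thesis unfolding infdist_notempty[OF \<open>Z \<noteq> {}\<close>] by (intro cINF_greatest) auto
qed

section \<open>Relatively thin triangles\<close>

lemma gprod_commute: "gprod x y z = gprod x z y"
  unfolding gprod_def by (simp add: dist_commute algebra_simps)

lemma gprod_add: "gprod x y z + gprod y x z = dist x y"
  unfolding gprod_def by (simp add: dist_commute field_simps)

lemma gprod_nonneg: "0 \<le> gprod x y z"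
  unfolding gprod_def using dist_triangle[of y z x] by (simp add: dist_commute)

lemma gprod_le_dist: "gprod x y z \<le> dist x y"
  using gprod_add[of x y z] gprod_nonneg[of y x z] by linarith

lemma tri_fibers_at_vertex_x:
  "s \<in> {0..<gprod x y z} \<Longrightarrow> {pxy s, pzx (dist z x - s)} \<in> tri_fibers x y z pxy pyz pzx"
  unfolding tri_fibers_def by blast

lemma tri_fibers_at_vertex_y:
  "s \<in> {0..<gprod y x z} \<Longrightarrow> {pxy (dist x y - s), pyz s} \<in> tri_fibers x y z pxy pyz pzx"
  unfolding tri_fibers_def by blast

lemma tri_fibers_at_vertex_z:
  "s \<in> {0..<gprod z x y} \<Longrightarrow> {pyz (dist y z - s), pzx s} \<in> tri_fibers x y z pxy pyz pzx"
  unfolding tri_fibers_def by blast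

text \<open>A \<open>\<nu>\<close>-thin triangle is also thin relative to every member of the collection, in the weak
  sense used below (without the clause that it is not \<open>\<nu>\<close>-thin).\<close>

lemma rel_thin_triangles_fibers:
  assumes "rel_thin_triangles \<nu> \<U>" "\<U> \<noteq> {}" "geod_triangle x y z pxy pyz pzx"
  shows "\<exists>U\<in>\<U>. \<forall>F\<in>tri_fibers x y z pxy pyz pzx. diameter F \<le> \<nu> \<or> F \<subseteq> nbhd \<nu> U"
  using assms unfolding rel_thin_triangles_def tri_thin_def tri_thin_rel_def by blast

lemma fiber_pair_close_or_near:
  assumes "\<forall>F\<in>\<F>. diameter F \<le> \<nu> \<or> F \<subseteq> nbhd \<nu> U" "{u, v} \<in> \<F>"
  shows "dist u v \<le> \<nu> \<or> (infdist u U \<le> \<nu> \<and> infdist v U \<le> \<nu>)"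
proof -
  have "dist u v \<le> diameter {u, v}"
    by (rule diameter_bounded_bound) (auto intro: finite_imp_bounded)
  then show ?thesis using assms unfolding nbhd_def by fastforce
qed

lemma rel_hyp_pair_dist_le:
  assumes "rel_hyp_pair \<nu> \<phi> \<U>" "U \<in> \<U>" "Z \<in> \<U>" "U \<noteq> Z" "0 \<le> r"
    and "infdist u U \<le> r" "infdist u Z \<le> r" "infdist v U \<le> r" "infdist v Z \<le> r"
  shows "dist u v \<le> \<phi> r"
proof -
  have bdd: "bounded (nbhd r U \<inter> nbhd r Z)" "diameter (nbhd r U \<inter> nbhd r Z) \<le> \<phi> r"
    using assms(1-5) unfolding rel_hyp_pair_def by blast+
  have "u \<in> nbhd r U \<inter> nbhd r Z" "v \<in> nbhd r U \<inter> nbhd r Z"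
    using assms(6-9) unfolding nbhd_def by auto
  then have "dist u v \<le> diameter (nbhd r U \<inter> nbhd r Z)" by (intro diameter_bounded_bound bdd)
  then show ?thesis using bdd(2) by linarith
qed

lemma interval_length_le:
  fixes lo hi D :: real
  assumes "0 \<le> D" "\<And>x y. lo < x \<Longrightarrow> x < y \<Longrightarrow> y < hi \<Longrightarrow> y - x \<le> D"
  shows "hi - lo \<le> D"
proof (rule ccontr)
  assume long: "\<not> hi - lo \<le> D"
  define \<delta> where "\<delta> = (hi - lo - D) / 3"
  have "0 < \<delta>" "lo + \<delta> < hi - \<delta>" using long assms(1) unfolding \<delta>_def by (simp_all add: field_simps)
  then have "(hi - \<delta>) - (lo + \<delta>) \<le> D" by (intro assms(2)) auto
  then show False unfolding \<delta>_def using long by (simp add: field_simps)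
qed

lemma short_excursion_bound:
  fixes F :: "real \<Rightarrow> real"
  assumes "0 \<le> \<nu>" "0 \<le> D"
    and start: "\<And>\<sigma>. 0 \<le> \<sigma> \<Longrightarrow> \<sigma> < K \<Longrightarrow> F \<sigma> \<le> \<sigma>"
    and lipschitz: "\<And>\<sigma> \<sigma>'. 0 \<le> \<sigma>' \<Longrightarrow> \<sigma>' \<le> \<sigma> \<Longrightarrow> \<sigma> < K \<Longrightarrow> F \<sigma> \<le> F \<sigma>' + (\<sigma> - \<sigma>')"
    and excursion: "\<And>\<sigma> \<sigma>'. 0 \<le> \<sigma>' \<Longrightarrow> \<sigma>' \<le> \<sigma> \<Longrightarrow> \<sigma> < K \<Longrightarrow> \<nu> < F \<sigma>' \<Longrightarrow> \<nu> < F \<sigma> \<Longrightarrow> \<sigma> - \<sigma>' \<le> D"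
    and "0 \<le> \<sigma>" "\<sigma> < K"
  shows "F \<sigma> \<le> \<nu> + D"
proof (rule field_le_epsilon)
  fix t :: real assume "0 < t"
  define \<sigma>' where "\<sigma>' = \<sigma> - D - t"
  consider "F \<sigma> \<le> \<nu>" | "\<sigma>' < 0" | "0 \<le> \<sigma>'" "F \<sigma>' \<le> \<nu>" | "0 \<le> \<sigma>'" "\<nu> < F \<sigma>'" "\<nu> < F \<sigma>"
    by linarith
  then show "F \<sigma> \<le> \<nu> + D + t"
  proof cases
    case 2
    then show ?thesis using start[of \<sigma>] assms(1,6,7) unfolding \<sigma>'_def by linarith
  next
    case 3
    then show ?thesis using lipschitz[of \<sigma>' \<sigma>] assms(2,7) \<open>0 < t\<close> unfolding \<sigma>'_def by linarith
  next
    case 4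
    then show ?thesis using excursion[of \<sigma>' \<sigma>] assms(2,7) \<open>0 < t\<close> unfolding \<sigma>'_def by linarith
  qed (use assms(2) \<open>0 < t\<close> in linarith)
qed

lemma exists_above_not_in_short_set:
  fixes J :: "real set"
  assumes short: "\<And>x y. x \<in> J \<Longrightarrow> y \<in> J \<Longrightarrow> y - x \<le> D"
    and "0 < \<epsilon>" "\<alpha> \<le> lo + D"
    and below: "\<And>\<sigma>. lo < \<sigma> \<Longrightarrow> \<sigma> < \<alpha> \<Longrightarrow> \<sigma> \<in> J"
  shows "\<exists>\<sigma>. \<alpha> < \<sigma> \<and> \<sigma> \<le> lo + D + \<epsilon> \<and> \<sigma> \<notin> J"
proof (rule ccontr)
  assume "\<nexists>\<sigma>. \<alpha> < \<sigma> \<and> \<sigma> \<le> lo + D + \<epsilon> \<and> \<sigma> \<notin> J"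
  then have above: "\<sigma> \<in> J" if "\<alpha> < \<sigma>" "\<sigma> \<le> lo + D + \<epsilon>" for \<sigma>
    using that by auto
  have top: "lo + D + \<epsilon> \<in> J" using above assms(2,3) by auto
  then have "0 \<le> D" using short[OF top top] by simp
  obtain \<sigma> where "\<sigma> \<in> J" "\<sigma> \<le> lo + \<epsilon> / 2"
  proof (cases "\<alpha> \<le> lo")
    case True
    have "\<alpha> < \<alpha> + \<epsilon> / 2" "\<alpha> + \<epsilon> / 2 \<le> lo + D + \<epsilon>" "\<alpha> + \<epsilon> / 2 \<le> lo + \<epsilon> / 2"
      using True \<open>0 < \<epsilon>\<close> \<open>0 \<le> D\<close> by auto
    then show ?thesis using that above by blast
  next
    case False
    define \<sigma> where "\<sigma> = lo + min (\<epsilon> / 2) ((\<alpha> - lo) / 2)"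
    have "lo < \<sigma>" "\<sigma> < \<alpha>" "\<sigma> \<le> lo + \<epsilon> / 2"
      using False \<open>0 < \<epsilon>\<close> unfolding \<sigma>_def min_def by (auto simp: field_simps)
    then show ?thesis using that below by blast
  qed
  then show False using short[OF \<open>\<sigma> \<in> J\<close> top] \<open>0 < \<epsilon>\<close> by linarith
qed

section \<open>The side \<open>[a, b]\<close> passes near the projections\<close>

locale projection_configuration =
  fixes \<C> :: "'a::metric_space set set" and \<nu> :: real and \<phi> :: "real \<Rightarrow> real"
    and Z :: "'a set" and a b p q :: 'a and c :: "real \<Rightarrow> 'a"
  assumes geodesic_space: "geodesic_space TYPE('a)"
    and rel_hyp: "rel_hyp_pair \<nu> \<phi> \<C>"
    and Z: "Z \<in> \<C>" "geod_convex Z"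
    and \<nu>_nonneg: "0 \<le> \<nu>" and \<phi>_nonneg: "\<And>r. 0 \<le> r \<Longrightarrow> 0 \<le> \<phi> r"
    and p: "p \<in> Z" "\<And>z. z \<in> Z \<Longrightarrow> dist a p \<le> dist a z"
    and q: "q \<in> Z" "\<And>z. z \<in> Z \<Longrightarrow> dist b q \<le> dist b z"
    and c: "geodesic_path c a b"
begin

abbreviation \<nu>' where "\<nu>' \<equiv> 4 * \<nu> + 2 * \<phi> \<nu>"

lemma \<phi>_\<nu>_nonneg: "0 \<le> \<phi> \<nu>"
  using \<phi>_nonneg \<nu>_nonneg by blast

lemma \<phi>_\<nu>'_nonneg: "0 \<le> \<phi> \<nu>'"
  using \<phi>_nonneg \<nu>_nonneg \<phi>_\<nu>_nonneg by simp

lemma near_U_and_Z_dist_le: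
  "U \<in> \<C> \<Longrightarrow> U \<noteq> Z \<Longrightarrow> 0 \<le> r \<Longrightarrow> infdist u U \<le> r \<Longrightarrow> infdist u Z \<le> r \<Longrightarrow>
    infdist v U \<le> r \<Longrightarrow> infdist v Z \<le> r \<Longrightarrow> dist u v \<le> \<phi> r"
  using rel_hyp_pair_dist_le[OF rel_hyp _ Z(1)] by blast

end

text \<open>\<open>U1\<close> and \<open>U2\<close> are members of the collection relative to which the triangles \<open>(p, a, b)\<close>
  and \<open>(p, q, b)\<close> are thin; either may be \<open>Z\<close> itself.\<close>

locale projection_triangles = projection_configuration +
  fixes e f g h :: "real \<Rightarrow> 'a::metric_space" and U1 U2 :: "'a set"
  assumes e: "geodesic_path e p q" and f: "geodesic_path f q b"
    and g: "geodesic_path g b p" and h: "geodesic_path h p a"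
    and U1: "U1 \<in> \<C>" "\<forall>F\<in>tri_fibers p a b h c g. diameter F \<le> \<nu> \<or> F \<subseteq> nbhd \<nu> U1"
    and U2: "U2 \<in> \<C>" "\<forall>F\<in>tri_fibers p q b e f g. diameter F \<le> \<nu> \<or> F \<subseteq> nbhd \<nu> U2"
begin

abbreviation G where "G \<sigma> \<equiv> g (dist b p - \<sigma>)"

lemma e_mem_Z: "s \<in> {0..dist p q} \<Longrightarrow> e s \<in> Z"
  using Z(2) p(1) q(1) e unfolding geod_convex_def geodesic_segment_def by blast

lemma h_far_from_Z: "s \<in> {0..dist p a} \<Longrightarrow> s \<le> infdist (h s) Z"
  using dist_proj_le_infdist[OF p, of "h s"] geodesic_path_dist_start[OF h, of s]
    geodesic_path_dist_end[OF h, of s] by (simp add: dist_commute)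

lemma f_far_from_Z: "s \<in> {0..dist q b} \<Longrightarrow> s \<le> infdist (f s) Z"
  using dist_proj_le_infdist[OF q, of "f s"] geodesic_path_dist_start[OF f, of s]
    geodesic_path_dist_end[OF f, of s] by (simp add: dist_commute)

lemma G_dist_p: "\<sigma> \<in> {0..dist b p} \<Longrightarrow> dist (G \<sigma>) p = \<sigma>"
  using geodesic_path_dist_end[OF g, of "dist b p - \<sigma>"] by auto

lemma G_dist: "\<sigma> \<in> {0..dist b p} \<Longrightarrow> \<sigma>' \<in> {0..dist b p} \<Longrightarrow> dist (G \<sigma>) (G \<sigma>') = \<bar>\<sigma> - \<sigma>'\<bar>"
  using geodesic_path_dist[OF g, of "dist b p - \<sigma>" "dist b p - \<sigma>'"] by auto

lemma gprod_p_q_b_le: "gprod p q b \<le> dist p q" "gprod p q b \<le> dist b p"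
  using gprod_le_dist[of p q b] gprod_le_dist[of p b q] gprod_commute[of p q b]
  by (auto simp: dist_commute)

text \<open>Near \<open>q\<close>, the side \<open>f\<close> leaves \<open>Z\<close> at unit speed while \<open>e\<close> stays in \<open>Z\<close>, so the fibers there
  are wide and force \<open>e\<close> to run within \<open>\<nu>\<close> of \<open>U2 \<noteq> Z\<close>; that can only last for \<open>\<phi> \<nu>\<close>.\<close>

lemma gprod_p_q_b_ge: "dist p q - (\<nu> + \<phi> \<nu>) \<le> gprod p q b"
proof -
  have near_U2: "U2 \<noteq> Z \<and> infdist (e (dist p q - s)) U2 \<le> \<nu>" if s: "\<nu> < s" "s < gprod q p b" for s
  proof -
    have "s \<le> dist p q" "s \<le> dist q b"
      using s gprod_le_dist[of q p b] gprod_le_dist[of q b p] gprod_commute[of q p b]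
      by (auto simp: dist_commute)
    then have far: "e (dist p q - s) \<in> Z" "s \<le> infdist (f s) Z"
      using s \<nu>_nonneg by (auto intro: e_mem_Z f_far_from_Z)
    then have "\<nu> < dist (e (dist p q - s)) (f s)"
      using s(1) infdist_le[of "e (dist p q - s)" Z "f s"] by (simp add: dist_commute)
    moreover have fiber: "{e (dist p q - s), f s} \<in> tri_fibers p q b e f g"
      using s \<nu>_nonneg by (intro tri_fibers_at_vertex_y) auto
    ultimately have "infdist (e (dist p q - s)) U2 \<le> \<nu>" "infdist (f s) U2 \<le> \<nu>"
      using fiber_pair_close_or_near[OF U2(2) fiber] by auto
    then show ?thesis using s(1) far(2) by auto
  qed
  have "gprod q p b - \<nu> \<le> \<phi> \<nu>"
  proof (rule interval_length_le[OF \<phi>_\<nu>_nonneg])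
    fix x y assume xy: "\<nu> < x" "x < y" "y < gprod q p b"
    have "y \<le> dist p q" using xy gprod_le_dist[of q p b] by (simp add: dist_commute)
    then have "dist (e (dist p q - x)) (e (dist p q - y)) = y - x"
      using geodesic_path_dist[OF e, of "dist p q - x" "dist p q - y"] xy \<nu>_nonneg by auto
    moreover have "dist (e (dist p q - x)) (e (dist p q - y)) \<le> \<phi> \<nu>"
    proof (rule near_U_and_Z_dist_le[OF U2(1)])
      show "U2 \<noteq> Z" "infdist (e (dist p q - x)) U2 \<le> \<nu>" "infdist (e (dist p q - y)) U2 \<le> \<nu>"
        using near_U2[of x] near_U2[of y] xy by auto
      show "infdist (e (dist p q - x)) Z \<le> \<nu>" "infdist (e (dist p q - y)) Z \<le> \<nu>"
        using e_mem_Z[of "dist p q - x"] e_mem_Z[of "dist p q - y"] xy \<open>y \<le> dist p q\<close> \<nu>_nonneg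
        by auto
    qed (rule \<nu>_nonneg)
    ultimately show "y - x \<le> \<phi> \<nu>" by simp
  qed
  then show ?thesis using gprod_add[of p q b] by linarith
qed

lemma G_near_Z:
  assumes "\<sigma> \<in> {0..<gprod p q b}"
  shows "infdist (G \<sigma>) Z \<le> \<nu> + \<phi> \<nu>"
proof -
  have near_U2: "U2 \<noteq> Z \<and> infdist (e \<sigma>) U2 \<le> \<nu>"
    if \<sigma>: "\<sigma> \<in> {0..<gprod p q b}" "\<nu> < infdist (G \<sigma>) Z" for \<sigma>
  proof -
    have "e \<sigma> \<in> Z" using \<sigma>(1) gprod_p_q_b_le by (auto intro: e_mem_Z)
    then have "\<nu> < dist (e \<sigma>) (G \<sigma>)"
      using \<sigma>(2) infdist_le[of "e \<sigma>" Z "G \<sigma>"] by (simp add: dist_commute)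
    moreover have fiber: "{e \<sigma>, G \<sigma>} \<in> tri_fibers p q b e f g"
      using tri_fibers_at_vertex_x[where pxy = e and pyz = f and pzx = g] \<sigma>(1) by simp
    ultimately have "infdist (e \<sigma>) U2 \<le> \<nu>" "infdist (G \<sigma>) U2 \<le> \<nu>"
      using fiber_pair_close_or_near[OF U2(2) fiber] by auto
    then show ?thesis using \<sigma>(2) by auto
  qed
  show ?thesis
  proof (rule short_excursion_bound[where F = "\<lambda>\<sigma>. infdist (G \<sigma>) Z" and K = "gprod p q b"])
    fix \<sigma> assume "0 \<le> \<sigma>" "\<sigma> < gprod p q b"
    then show "infdist (G \<sigma>) Z \<le> \<sigma>"
      using infdist_le[OF p(1), of "G \<sigma>"] G_dist_p gprod_p_q_b_le by auto
  next
    fix \<sigma> \<sigma>' assume "0 \<le> \<sigma>'" "\<sigma>' \<le> \<sigma>" "\<sigma> < gprod p q b"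
    then show "infdist (G \<sigma>) Z \<le> infdist (G \<sigma>') Z + (\<sigma> - \<sigma>')"
      using infdist_triangle[of "G \<sigma>" Z "G \<sigma>'"] G_dist[of \<sigma> \<sigma>'] gprod_p_q_b_le by auto
  next
    fix \<sigma> \<sigma>' assume \<sigma>: "0 \<le> \<sigma>'" "\<sigma>' \<le> \<sigma>" "\<sigma> < gprod p q b"
      "\<nu> < infdist (G \<sigma>') Z" "\<nu> < infdist (G \<sigma>) Z"
    then have "dist (e \<sigma>) (e \<sigma>') = \<sigma> - \<sigma>'"
      using geodesic_path_dist[OF e, of \<sigma> \<sigma>'] gprod_p_q_b_le by auto
    moreover have "dist (e \<sigma>) (e \<sigma>') \<le> \<phi> \<nu>"
    proof (rule near_U_and_Z_dist_le[OF U2(1)])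
      show "U2 \<noteq> Z" "infdist (e \<sigma>) U2 \<le> \<nu>" "infdist (e \<sigma>') U2 \<le> \<nu>"
        using near_U2[of \<sigma>] near_U2[of \<sigma>'] \<sigma> by auto
      show "infdist (e \<sigma>) Z \<le> \<nu>" "infdist (e \<sigma>') Z \<le> \<nu>"
        using e_mem_Z[of \<sigma>] e_mem_Z[of \<sigma>'] \<sigma> gprod_p_q_b_le \<nu>_nonneg by auto
    qed (rule \<nu>_nonneg)
    ultimately show "\<sigma> - \<sigma>' \<le> \<phi> \<nu>" by simp
  qed (use assms \<nu>_nonneg \<phi>_\<nu>_nonneg in auto)
qed

lemma G_near_U1:
  assumes "\<sigma> \<in> {0..<gprod p a b}" "\<sigma> < gprod p q b" "2 * \<nu> + \<phi> \<nu> < \<sigma>"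
  shows "U1 \<noteq> Z \<and> infdist (G \<sigma>) U1 \<le> \<nu>"
proof -
  have "\<sigma> \<le> dist p a" using assms(1) gprod_le_dist[of p a b] by auto
  then have far: "\<sigma> \<le> infdist (h \<sigma>) Z" using assms(1) by (auto intro: h_far_from_Z)
  have "infdist (G \<sigma>) Z \<le> \<nu> + \<phi> \<nu>" using assms(1,2) by (auto intro: G_near_Z)
  then have "\<nu> < dist (h \<sigma>) (G \<sigma>)"
    using far assms(3) infdist_triangle[of "h \<sigma>" Z "G \<sigma>"] by linarith
  moreover have fiber: "{h \<sigma>, G \<sigma>} \<in> tri_fibers p a b h c g"
    using tri_fibers_at_vertex_x[where pxy = h and pyz = c and pzx = g] assms(1) by simp
  ultimately have "infdist (h \<sigma>) U1 \<le> \<nu>" "infdist (G \<sigma>) U1 \<le> \<nu>"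
    using fiber_pair_close_or_near[OF U1(2) fiber] by auto
  then show ?thesis using far assms(3) \<nu>_nonneg \<phi>_\<nu>_nonneg by auto
qed

lemma G_near_U1_short:
  assumes "U1 \<noteq> Z" "\<sigma> \<in> {0..<gprod p q b}" "\<sigma>' \<in> {0..<gprod p q b}"
    and "infdist (G \<sigma>) U1 \<le> \<nu>" "infdist (G \<sigma>') U1 \<le> \<nu>"
  shows "\<bar>\<sigma> - \<sigma>'\<bar> \<le> \<phi> \<nu>'"
proof -
  have "dist (G \<sigma>) (G \<sigma>') = \<bar>\<sigma> - \<sigma>'\<bar>" using assms(2,3) G_dist gprod_p_q_b_le by auto
  moreover have "dist (G \<sigma>) (G \<sigma>') \<le> \<phi> \<nu>'"
    using assms G_near_Z[of \<sigma>] G_near_Z[of \<sigma>'] \<nu>_nonneg \<phi>_\<nu>_nonneg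
    by (intro near_U_and_Z_dist_le[OF U1(1)]) auto
  ultimately show ?thesis by simp
qed

text \<open>Along \<open>g\<close>, close to \<open>Z\<close> by \<open>G_near_Z\<close>, the side \<open>h\<close> leaves \<open>Z\<close> at unit speed; as before
  this can only be tolerated for a bounded time, which bounds the Gromov product at \<open>p\<close>.\<close>

lemma gprod_p_a_b_le:
  assumes "2 * \<nu> + \<phi> \<nu> + \<phi> \<nu>' < gprod p q b"
  shows "gprod p a b \<le> 2 * \<nu> + \<phi> \<nu> + \<phi> \<nu>'"
proof -
  have "min (gprod p a b) (gprod p q b) - (2 * \<nu> + \<phi> \<nu>) \<le> \<phi> \<nu>'"
  proof (rule interval_length_le[OF \<phi>_\<nu>'_nonneg])
    fix x y assume xy: "2 * \<nu> + \<phi> \<nu> < x" "x < y" "y < min (gprod p a b) (gprod p q b)"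
    then have "0 \<le> x" using \<nu>_nonneg \<phi>_\<nu>_nonneg by linarith
    then have "U1 \<noteq> Z \<and> infdist (G x) U1 \<le> \<nu>" "infdist (G y) U1 \<le> \<nu>"
      using xy G_near_U1[of x] G_near_U1[of y] by auto
    then show "y - x \<le> \<phi> \<nu>'" using G_near_U1_short[of x y] xy \<open>0 \<le> x\<close> by auto
  qed
  then show ?thesis using assms by (auto simp: min_def split: if_splits)
qed

lemma near_p_if_U1_eq_Z:
  assumes "U1 = Z" "0 < \<epsilon>"
  shows "\<exists>s\<in>{0..dist a b}. dist (c s) p \<le> \<nu> + max (gprod p a b) \<nu> + \<epsilon>"
proof (cases "dist p a < max (gprod p a b) \<nu> + \<epsilon>")
  case True
  then show ?thesis
    using geodesic_path_start[OF c] \<nu>_nonneg by (intro bexI[of _ 0]) (auto simp: dist_commute)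
next
  case False
  define \<tau> where "\<tau> = max (gprod p a b) \<nu> + \<epsilon>"
  define s where "s = dist p a - \<tau>"
  have s: "s \<in> {0..<gprod a p b}"
    using False gprod_add[of p a b] \<open>0 < \<epsilon>\<close> unfolding s_def \<tau>_def by auto
  then have "s \<le> dist a b" using gprod_le_dist[of a b p] gprod_commute[of a p b] by auto
  have \<tau>: "\<tau> \<in> {0..dist p a}" using False \<nu>_nonneg \<open>0 < \<epsilon>\<close> unfolding \<tau>_def by auto
  have fiber: "{h \<tau>, c s} \<in> tri_fibers p a b h c g"
    using tri_fibers_at_vertex_y[OF s, where pxy = h and pyz = c and pzx = g] unfolding s_def by simp
  have "\<nu> < infdist (h \<tau>) Z" using h_far_from_Z[OF \<tau>] \<open>0 < \<epsilon>\<close> unfolding \<tau>_def by auto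
  then have "dist (h \<tau>) (c s) \<le> \<nu>" using fiber_pair_close_or_near[OF U1(2) fiber] assms(1) by auto
  moreover have "dist (h \<tau>) p = \<tau>" using geodesic_path_dist_start[OF h \<tau>] by (simp add: dist_commute)
  ultimately have "dist (c s) p \<le> \<nu> + \<tau>"
    using dist_triangle[of "c s" p "h \<tau>"] by (simp add: dist_commute)
  then show ?thesis using s \<open>s \<le> dist a b\<close> unfolding \<tau>_def by (intro bexI[of _ s]) auto
qed

lemma near_p_if_G_far_from_U1:
  assumes "gprod p a b < \<sigma>" "\<sigma> \<le> dist b p" "\<nu> < infdist (G \<sigma>) U1"
  shows "\<exists>s\<in>{0..dist a b}. dist (c s) p \<le> \<nu> + \<sigma>"
proof -
  define s where "s = dist b p - \<sigma>"
  have s: "s \<in> {0..<gprod b p a}"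
    using assms(1,2) gprod_add[of b p a] gprod_commute[of p a b] unfolding s_def by auto
  have fiber: "{c (dist a b - s), G \<sigma>} \<in> tri_fibers p a b h c g"
    using tri_fibers_at_vertex_z[OF s, where pxy = h and pyz = c and pzx = g] by (simp add: s_def)
  have "dist (c (dist a b - s)) (G \<sigma>) \<le> \<nu>"
    using fiber_pair_close_or_near[OF U1(2) fiber] assms(3) by auto
  moreover have "dist (G \<sigma>) p = \<sigma>" using G_dist_p assms gprod_nonneg[of p a b] by auto
  moreover have "dist a b - s \<in> {0..dist a b}"
    using s gprod_le_dist[of b a p] gprod_commute[of b p a] by (auto simp: dist_commute)
  ultimately show ?thesis
    using dist_triangle[of "c (dist a b - s)" p "G \<sigma>"] by (intro bexI[of _ "dist a b - s"]) auto
qed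

lemma near_p_if_U1_ne_Z:
  assumes "U1 \<noteq> Z" "0 < \<epsilon>" "2 * \<nu> + \<phi> \<nu> + \<phi> \<nu>' + \<epsilon> < gprod p q b"
  shows "\<exists>s\<in>{0..dist a b}. dist (c s) p \<le> 3 * \<nu> + \<phi> \<nu> + \<phi> \<nu>' + \<epsilon>"
proof -
  define J where "J = {\<sigma>. 0 \<le> \<sigma> \<and> \<sigma> < gprod p q b \<and> infdist (G \<sigma>) U1 \<le> \<nu>}"
  have \<alpha>: "gprod p a b \<le> 2 * \<nu> + \<phi> \<nu> + \<phi> \<nu>'"
    using gprod_p_a_b_le assms(2,3) by auto
  have "\<exists>\<sigma>. gprod p a b < \<sigma> \<and> \<sigma> \<le> (2 * \<nu> + \<phi> \<nu>) + \<phi> \<nu>' + \<epsilon> \<and> \<sigma> \<notin> J"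
  proof (rule exists_above_not_in_short_set)
    show "y - x \<le> \<phi> \<nu>'" if "x \<in> J" "y \<in> J" for x y
      using G_near_U1_short[OF assms(1), of y x] that unfolding J_def by auto
    show "\<sigma> \<in> J" if "2 * \<nu> + \<phi> \<nu> < \<sigma>" "\<sigma> < gprod p a b" for \<sigma>
      using that G_near_U1[of \<sigma>] \<alpha> assms(2,3) \<nu>_nonneg \<phi>_\<nu>_nonneg unfolding J_def by auto
  qed (use assms(2) \<alpha> in auto)
  then obtain \<sigma> where \<sigma>: "gprod p a b < \<sigma>" "\<sigma> \<le> 2 * \<nu> + \<phi> \<nu> + \<phi> \<nu>' + \<epsilon>" "\<sigma> \<notin> J"
    by auto
  have "0 \<le> \<sigma>" "\<sigma> < gprod p q b" using \<sigma>(1,2) assms(3) gprod_nonneg[of p a b] by auto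
  then have "\<nu> < infdist (G \<sigma>) U1" "\<sigma> \<le> dist b p"
    using \<sigma>(3) gprod_p_q_b_le unfolding J_def by auto
  then obtain s where "s \<in> {0..dist a b}" "dist (c s) p \<le> \<nu> + \<sigma>"
    using near_p_if_G_far_from_U1[OF \<sigma>(1)] by blast
  then show ?thesis using \<sigma>(2) by (intro bexI[of _ s]) auto
qed

lemma near_p:
  assumes "3 * \<nu> + 2 * \<phi> \<nu> + \<phi> \<nu>' < dist p q" "0 < \<epsilon>"
  shows "\<exists>s\<in>{0..dist a b}. dist (c s) p \<le> 3 * \<nu> + \<phi> \<nu> + \<phi> \<nu>' + \<epsilon>"
proof -
  have big: "2 * \<nu> + \<phi> \<nu> + \<phi> \<nu>' < gprod p q b" using gprod_p_q_b_ge assms(1) by linarith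
  show ?thesis
  proof (cases "U1 = Z")
    case True
    have "max (gprod p a b) \<nu> \<le> 2 * \<nu> + \<phi> \<nu> + \<phi> \<nu>'"
      using gprod_p_a_b_le[OF big] \<nu>_nonneg \<phi>_\<nu>_nonneg \<phi>_\<nu>'_nonneg by auto
    moreover obtain s where "s \<in> {0..dist a b}" "dist (c s) p \<le> \<nu> + max (gprod p a b) \<nu> + \<epsilon>"
      using near_p_if_U1_eq_Z[OF True assms(2)] by blast
    ultimately show ?thesis by (intro bexI[of _ s]) auto
  next
    case False
    define \<epsilon>' where "\<epsilon>' = min \<epsilon> ((gprod p q b - (2 * \<nu> + \<phi> \<nu> + \<phi> \<nu>')) / 2)"
    have "0 < \<epsilon>'" "\<epsilon>' \<le> \<epsilon>" "2 * \<nu> + \<phi> \<nu> + \<phi> \<nu>' + \<epsilon>' < gprod p q b"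
      using big assms(2) unfolding \<epsilon>'_def min_def by (auto simp: field_simps)
    then obtain s where "s \<in> {0..dist a b}" "dist (c s) p \<le> 3 * \<nu> + \<phi> \<nu> + \<phi> \<nu>' + \<epsilon>'"
      using near_p_if_U1_ne_Z[OF False] by blast
    then show ?thesis using \<open>\<epsilon>' \<le> \<epsilon>\<close> by (intro bexI[of _ s]) auto
  qed
qed

end

context projection_configuration
begin

lemma exists_near_projection:
  assumes "3 * \<nu> + 2 * \<phi> \<nu> + \<phi> \<nu>' < dist p q"
  shows "\<exists>s\<in>{0..dist a b}. dist (c s) p \<le> 3 * \<nu> + \<phi> \<nu> + \<phi> \<nu>'"
proof (rule geodesic_path_attains_near[OF c])
  obtain e f g h where e: "geodesic_path e p q" and f: "geodesic_path f q b"
    and g: "geodesic_path g b p" and h: "geodesic_path h p a"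
    using geodesic_space unfolding geodesic_space_def by metis
  have "geod_triangle p a b h c g" "geod_triangle p q b e f g"
    unfolding geod_triangle_def using e f g h c by auto
  then obtain U1 U2 where
    "U1 \<in> \<C>" "\<forall>F\<in>tri_fibers p a b h c g. diameter F \<le> \<nu> \<or> F \<subseteq> nbhd \<nu> U1"
    "U2 \<in> \<C>" "\<forall>F\<in>tri_fibers p q b e f g. diameter F \<le> \<nu> \<or> F \<subseteq> nbhd \<nu> U2"
    using rel_thin_triangles_fibers rel_hyp Z(1) unfolding rel_hyp_pair_def by (metis empty_iff)
  then interpret projection_triangles \<C> \<nu> \<phi> Z a b p q c e f g h U1 U2
    using projection_configuration_axioms e f g h
    by (simp add: projection_triangles_def projection_triangles_axioms_def)
  fix \<epsilon> :: real assume "0 < \<epsilon>"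
  then show "\<exists>s\<in>{0..dist a b}. dist (c s) p \<le> 3 * \<nu> + \<phi> \<nu> + \<phi> \<nu>' + \<epsilon>"
    using near_p[OF assms] by blast
qed

end

section \<open>Slim quadrilaterals\<close>

lemma nbhd_mono:
  assumes "A \<subseteq> nbhd r S" "S \<subseteq> T" "S \<noteq> {}"
  shows "A \<subseteq> nbhd r T"
proof
  fix x assume "x \<in> A"
  then have "infdist x S \<le> r" using assms(1) unfolding nbhd_def by auto
  then show "x \<in> nbhd r T" using infdist_mono[OF assms(2,3), of x] unfolding nbhd_def by simp
qed

lemma geodesic_segment_nonempty: "geodesic_segment g x y \<noteq> {}"
  unfolding geodesic_segment_def by auto

lemma geodesic_segment_three_pieces:
  assumes "s \<in> {0..dist x y}" "t \<in> {0..dist x y}"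
  shows "geodesic_segment c x y = c ` {0..s} \<union> c ` {t..dist x y} \<union> c ` {min s t..max s t}"
proof -
  have "{0..dist x y} = {0..s} \<union> {t..dist x y} \<union> {min s t..max s t}" using assms by auto
  then show ?thesis unfolding geodesic_segment_def image_Un[symmetric] by simp
qed

lemma CAT0_subsegment_near:
  fixes x y x' y' :: "'a::metric_space"
  assumes cat: "CAT0 TYPE('a)" and c: "geodesic_path c x y" and uv: "0 \<le> u" "u \<le> v" "v \<le> dist x y"
    and c': "geodesic_path c' x' y'" and r: "dist x' (c u) \<le> r" "dist y' (c v) \<le> r"
  shows "geodesic_segment c' x' y' \<subseteq> nbhd r (c ` {u..v})"
    and "c ` {u..v} \<subseteq> nbhd r (geodesic_segment c' x' y')"
  using CAT0_segment_subset_nbhd[OF cat c' geodesic_subpath(1)[OF c uv] r]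
    CAT0_segment_subset_nbhd[OF cat geodesic_subpath(1)[OF c uv] c'] r
  unfolding geodesic_subpath(2)[OF c uv] by (simp_all add: dist_commute)

text \<open>If the side \<open>[a, b]\<close> passes within \<open>r\<close> of both \<open>p\<close> and \<open>q\<close>, it splits into three pieces
  which fellow-travel, by convexity of the CAT(0) metric, the other three sides.\<close>

lemma CAT0_quad_slim_if_side_near:
  fixes p a b q :: "'a::metric_space"
  assumes cat: "CAT0 TYPE('a)" and Q: "geod_quad p a b q q1 q2 q3 q4"
    and sp: "sp \<in> {0..dist a b}" and sq: "sq \<in> {0..dist a b}"
    and near_p: "dist (q2 sp) p \<le> r" and near_q: "dist (q2 sq) q \<le> r"
  shows "quad_slim r p a b q q1 q2 q3 q4"
proof -
  have q1: "geodesic_path q1 p a" and q2: "geodesic_path q2 a b"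
    and q3: "geodesic_path q3 b q" and q4: "geodesic_path q4 q p"
    using Q unfolding geod_quad_def by auto
  define S1 where "S1 = geodesic_segment q1 p a"
  define S2 where "S2 = geodesic_segment q2 a b"
  define S3 where "S3 = geodesic_segment q3 b q"
  define S4 where "S4 = geodesic_segment q4 q p"
  define P1 where "P1 = q2 ` {0..sp}"
  define P3 where "P3 = q2 ` {sq..dist a b}"
  define P4 where "P4 = q2 ` {min sp sq..max sp sq}"
  have "0 \<le> r" using near_p zero_le_dist order_trans by blast
  have ends: "q2 0 = a" "q2 (dist a b) = b"
    using geodesic_path_start[OF q2] geodesic_path_end[OF q2] by auto
  have S1: "S1 \<subseteq> nbhd r P1" "P1 \<subseteq> nbhd r S1"
    using CAT0_subsegment_near[OF cat q2 _ _ _ geodesic_path_reverse[OF q1]] sp near_p \<open>0 \<le> r\<close> ends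
    unfolding S1_def P1_def geodesic_segment_reverse by (auto simp: dist_commute)
  have S3: "S3 \<subseteq> nbhd r P3" "P3 \<subseteq> nbhd r S3"
    using CAT0_subsegment_near[OF cat q2 _ _ _ geodesic_path_reverse[OF q3]] sq near_q \<open>0 \<le> r\<close> ends
    unfolding S3_def P3_def geodesic_segment_reverse by (auto simp: dist_commute)
  have S4: "S4 \<subseteq> nbhd r P4 \<and> P4 \<subseteq> nbhd r S4"
  proof (cases "sp \<le> sq")
    case True
    then show ?thesis
      using CAT0_subsegment_near[OF cat q2 _ True _ geodesic_path_reverse[OF q4]] sp sq near_p near_q
      unfolding S4_def P4_def geodesic_segment_reverse by (auto simp: dist_commute)
  next
    case False
    then show ?thesis
      using CAT0_subsegment_near[OF cat q2 _ _ _ q4, of sq sp] sp sq near_p near_q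
      unfolding S4_def P4_def by (auto simp: dist_commute)
  qed
  have S2: "S2 = P1 \<union> P3 \<union> P4"
    unfolding S2_def P1_def P3_def P4_def by (rule geodesic_segment_three_pieces[OF sp sq])
  have ne: "P1 \<noteq> {}" "P3 \<noteq> {}" "P4 \<noteq> {}" "S1 \<noteq> {}" "S3 \<noteq> {}" "S4 \<noteq> {}"
    using sp sq unfolding P1_def P3_def P4_def S1_def S3_def S4_def
    by (auto simp: geodesic_segment_nonempty)
  have "S1 \<subseteq> nbhd r (S2 \<union> S3 \<union> S4)" by (rule nbhd_mono[OF S1(1)]) (use S2 ne in auto)
  moreover have "S3 \<subseteq> nbhd r (S1 \<union> S2 \<union> S4)" by (rule nbhd_mono[OF S3(1)]) (use S2 ne in auto)
  moreover have "S4 \<subseteq> nbhd r (S1 \<union> S2 \<union> S3)"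
    by (rule nbhd_mono[OF conjunct1[OF S4]]) (use S2 ne in auto)
  moreover have "S2 \<subseteq> nbhd r (S1 \<union> S3 \<union> S4)"
    using nbhd_mono[OF S1(2), of "S1 \<union> S3 \<union> S4"] nbhd_mono[OF S3(2), of "S1 \<union> S3 \<union> S4"]
      nbhd_mono[OF conjunct2[OF S4], of "S1 \<union> S3 \<union> S4"] S2 ne by auto
  ultimately show ?thesis
    unfolding quad_slim_def Let_def S1_def[symmetric] S2_def[symmetric] S3_def[symmetric]
      S4_def[symmetric] by blast
qed

theorem lemma2p11:
  fixes \<C> :: "'a::complete_space set set"
    and \<nu> :: real and \<phi> :: "real \<Rightarrow> real"
    and Z :: "'a set" and a b :: 'a
    and q1 q2 q3 q4 :: "real \<Rightarrow> 'a"
  assumes "CAT0 TYPE('a)"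
    and "\<forall>C\<in>\<C>. C \<noteq> {} \<and> closed C \<and> geod_convex C"
    and "\<nu> \<ge> 0" and "\<forall>r\<ge>0. \<phi> r \<ge> 0"
    and "rel_hyp_pair \<nu> \<phi> \<C>"
    and "Z \<in> \<C>"
    and "geod_quad (closest_proj Z a) a b (closest_proj Z b) q1 q2 q3 q4"
  shows "(let \<nu>' = 4 * \<nu> + 2 * \<phi> \<nu>; \<nu>'' = 4 * \<nu> + 2 * \<phi> \<nu>' in
          dist (closest_proj Z a) (closest_proj Z b) \<le> \<phi> \<nu>' + 2 * \<nu> + 3 * \<nu>' \<or>
          quad_slim (\<nu>' + \<nu>'') (closest_proj Z a) a b (closest_proj Z b) q1 q2 q3 q4)"
proof -
  define p q where "p = closest_proj Z a" and "q = closest_proj Z b"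
  have Z_props: "Z \<noteq> {}" "closed Z" "geod_convex Z" using assms(2,6) by auto
  have q2: "geodesic_path q2 a b" using assms(7) unfolding geod_quad_def by auto
  interpret projection_configuration \<C> \<nu> \<phi> Z a b p q q2
    using assms closest_proj_mem[OF assms(1) Z_props] closest_proj_le[OF assms(1) Z_props] q2
    unfolding projection_configuration_def CAT0_def p_def q_def by auto
  interpret reverse: projection_configuration \<C> \<nu> \<phi> Z b a q p "\<lambda>t. q2 (dist a b - t)"
    using assms closest_proj_mem[OF assms(1) Z_props] closest_proj_le[OF assms(1) Z_props] geodesic_path_reverse[OF q2]
    unfolding projection_configuration_def CAT0_def p_def q_def by auto
  have "quad_slim (\<nu>' + (4 * \<nu> + 2 * \<phi> \<nu>')) p a b q q1 q2 q3 q4"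
    if far: "\<phi> \<nu>' + 2 * \<nu> + 3 * \<nu>' < dist p q"
  proof -
    have "3 * \<nu> + 2 * \<phi> \<nu> + \<phi> \<nu>' < dist p q" using far \<nu>_nonneg \<phi>_\<nu>_nonneg by argo
    then obtain sp sq where "sp \<in> {0..dist a b}" "dist (q2 sp) p \<le> 3 * \<nu> + \<phi> \<nu> + \<phi> \<nu>'"
      and "sq \<in> {0..dist b a}" "dist (q2 (dist a b - sq)) q \<le> 3 * \<nu> + \<phi> \<nu> + \<phi> \<nu>'"
      using exists_near_projection reverse.exists_near_projection by (metis dist_commute)
    then show ?thesis
      using CAT0_quad_slim_if_side_near[OF assms(1) assms(7)[folded p_def q_def],
          where sp = sp and sq = "dist a b - sq" and r = "\<nu>' + (4 * \<nu> + 2 * \<phi> \<nu>')"]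
        \<nu>_nonneg \<phi>_\<nu>_nonneg \<phi>_\<nu>'_nonneg by (auto simp: dist_commute)
  qed
  then show ?thesis unfolding Let_def p_def[symmetric] q_def[symmetric] by fastforce
qed

end
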